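(* Let $n\ge 1$, $N=2^n$ and $s=(N-1)/2$. Let $0\le j<N/2$ be an integer and let $z=W^{(N)}_j$ be the $j$-th Hadamard codeword. Then $$\hat H^{\otimes n}\,\hat U_z\,\hat H^{\otimes n}\left(\left|\tfrac12\right\rangle_s+\left|-\tfrac12\right\rangle_s\right)=\left|\tfrac12+j\right\rangle_s+\left|-\tfrac12-j\right\rangle_s .$$
   Context: Work in $\mathbb{C}^N$ with computational basis $\{|y\rangle : y=0,1,\dots,N-1\}$. The spin basis states $|m\rangle_s$, $m\in\{-s,-s+1,\dots,s\}$, are identified with computational basis states via $|m\rangle_s=|m+s\rangle$; for example $|\tfrac12\rangle_s=|N/2\rangle$ and $|-\tfrac12\rangle_s=|N/2-1\rangle$. For $x,y\in\{0,\dots,N-1\}$ let $x\cdot y\in\{0,1\}$ be the inner product modulo 2 of their $n$-bit binary expansions. $\hat H^{\otimes n}$ is the $n$-qubit Hadamard transform, $\hat H^{\otimes n}|y\rangle=N^{-1/2}\sum_{x=0}^{N-1}(-1)^{x\cdot y}|x\rangle$. For $j\in\{0,\dots,N-1\}$ the Hadamard codeword $W^{(N)}_j\in\{0,1\}^N$ is the bit string whose bit at position $x\in\{0,\dots,N-1\}$ is $x\cdot j$. For a string $z=(z_0,\dots,z_{N-1})\in\{0,1\}^N$, the oracle $\hat U_z$ is the diagonal unitary $\hat U_z|x\rangle=(-1)^{z_x}|x\rangle$. *)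

theory Defs
  imports Complex_Main
begin

(* Vectors in C^N (N = 2^n) are modelled as functions nat => complex,
  with coordinates indexed by the computational basis 0..N-1 (zero outside). *)

definition bdot :: "nat \<Rightarrow> nat \<Rightarrow> nat \<Rightarrow> nat" where
  "bdot n x y = card {i. i < n \<and> bit x i \<and> bit y i} mod 2"

definition ket :: "nat \<Rightarrow> nat \<Rightarrow> nat \<Rightarrow> complex" where
  "ket N k = (\<lambda>y. if y = k \<and> k < N then 1 else 0)"

definition spin_ket :: "nat \<Rightarrow> real \<Rightarrow> nat \<Rightarrow> complex" where
  "spin_ket N m = ket N (nat \<lfloor>m + (real N - 1) / 2\<rfloor>)"

definition hadamard :: "nat \<Rightarrow> (nat \<Rightarrow> complex) \<Rightarrow> nat \<Rightarrow> complex" where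
  "hadamard n v = (\<lambda>x. if x < 2 ^ n then
      complex_of_real (1 / sqrt (2 ^ n)) * (\<Sum>y<2 ^ n. (-1) ^ bdot n x y * v y) else 0)"

definition hadamard_codeword :: "nat \<Rightarrow> nat \<Rightarrow> nat \<Rightarrow> nat" where
  "hadamard_codeword n j = (\<lambda>x. bdot n x j)"

definition phase_oracle :: "nat \<Rightarrow> (nat \<Rightarrow> nat) \<Rightarrow> (nat \<Rightarrow> complex) \<Rightarrow> nat \<Rightarrow> complex" where
  "phase_oracle N z v = (\<lambda>x. if x < N then (-1) ^ z x * v x else 0)"

end

theory Submission
  imports Defs
begin

text \<open>The characters \<open>x \<mapsto> (-1)^(x\<cdot>a)\<close> of the group of \<open>n\<close>-bit strings under XOR are
  multiplicative in \<open>a\<close> and orthogonal, so the Hadamard transform diagonalises translations: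
  the phase oracle of the codeword \<open>W\<^sub>j\<close> multiplies the \<open>a\<close>-th Hadamard coefficient by
  \<open>(-1)^(a\<cdot>j)\<close>, and conjugating it by \<open>H\<^sup>\<otimes>\<^sup>n\<close> gives the permutation \<open>|y\<rangle> \<mapsto> |y XOR j\<rangle>\<close>.
  With \<open>N = 2M\<close>, the states \<open>|\<plusminus>1/2\<rangle>\<^sub>s\<close> are \<open>|M\<rangle>\<close> and \<open>|M-1\<rangle> = |0\<dots>01\<dots>1\<rangle>\<close>; for \<open>j < M\<close>,
  XOR with \<open>j\<close> maps \<open>M\<close> to \<open>M + j\<close> and \<open>M - 1\<close> to \<open>M - 1 - j\<close>.\<close>

unbundle bit_operations_syntax

lemma minus_one_power_card_eq_prod:
  fixes n :: nat
  shows "(-1::'a::comm_ring_1) ^ card {i. i < n \<and> P i} = (\<Prod>i<n. if P i then -1 else 1)"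
proof (induction n)
  case 0
  then show ?case by simp
next
  case (Suc n)
  have "{i. i < Suc n \<and> P i} = {i. i < n \<and> P i} \<union> (if P n then {n} else {})"
    by (auto simp: less_Suc_eq)
  then show ?case using Suc by (auto simp: card_insert_if)
qed

lemma minus_one_power_bdot:
  "(-1::'a::comm_ring_1) ^ bdot n x a = (\<Prod>i<n. if bit x i \<and> bit a i then -1 else 1)"
  unfolding bdot_def by (simp add: minus_one_power_iff flip: minus_one_power_card_eq_prod)

lemma bdot_commute: "bdot n x y = bdot n y x"
  by (simp add: bdot_def conj_commute)

lemma minus_one_power_bdot_xor:
  "(-1::'a::comm_ring_1) ^ bdot n x (a XOR b) = (-1) ^ bdot n x a * (-1) ^ bdot n x b"
  unfolding minus_one_power_bdot prod.distrib[symmetric]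
  by (intro prod.cong) (auto simp: bit_xor_iff)

lemma sum_lessThan_double:
  fixes g :: "nat \<Rightarrow> 'a::comm_monoid_add"
  shows "(\<Sum>x<2 * m. g x) = (\<Sum>x<m. g (2 * x) + g (2 * x + 1))"
  by (induction m) (simp_all add: sum.distrib ac_simps)

lemma sum_prod_bits:
  fixes f :: "nat \<Rightarrow> bool \<Rightarrow> 'a::comm_semiring_1"
  shows "(\<Sum>x<(2::nat) ^ n. \<Prod>i<n. f i (bit x i)) = (\<Prod>i<n. f i False + f i True)"
proof (induction n arbitrary: f)
  case 0
  then show ?case by simp
next
  case (Suc n)
  have bits: "(\<Prod>i<Suc n. f i (bit (2 * x + of_bool b) i)) = f 0 b * (\<Prod>i<n. f (Suc i) (bit x i))"
    for x :: nat and b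
    by (simp only: prod.lessThan_Suc_shift) (simp add: bit_Suc bit_0)
  have "(\<Sum>x<(2::nat) ^ Suc n. \<Prod>i<Suc n. f i (bit x i))
      = (\<Sum>x<(2::nat) ^ n. (f 0 False + f 0 True) * (\<Prod>i<n. f (Suc i) (bit x i)))"
    using bits[of _ False] bits[of _ True]
    by (simp only: power_Suc sum_lessThan_double distrib_right) simp
  also have "\<dots> = (f 0 False + f 0 True) * (\<Prod>i<n. f (Suc i) False + f (Suc i) True)"
    by (simp add: Suc.IH[of "\<lambda>i. f (Suc i)"] flip: sum_distrib_left)
  also have "\<dots> = (\<Prod>i<Suc n. f i False + f i True)"
    by (rule prod.lessThan_Suc_shift[symmetric])
  finally show ?case .
qed

lemma sum_minus_one_power_bdot:
  "(\<Sum>x<(2::nat) ^ n. (-1::'a::comm_ring_1) ^ bdot n x a) = (if \<forall>i<n. \<not> bit a i then 2 ^ n else 0)"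
proof -
  have "(\<Sum>x<(2::nat) ^ n. (-1::'a) ^ bdot n x a) = (\<Prod>i<n. 1 + (if bit a i then -1 else 1))"
    using sum_prod_bits[of "\<lambda>i b. if b \<and> bit a i then -1 else 1 :: 'a" n]
    by (simp add: minus_one_power_bdot)
  also have "\<dots> = (if \<forall>i<n. \<not> bit a i then 2 ^ n else 0)"
  proof (cases "\<forall>i<n. \<not> bit a i")
    case True
    then have "(\<Prod>i<n. 1 + (if bit a i then -1 else 1)) = (\<Prod>i<n. 2::'a)"
      by (intro prod.cong) auto
    then show ?thesis using True by simp
  next
    case False
    then obtain i where "i < n" "bit a i" by auto
    then have "(\<Prod>i<n. 1 + (if bit a i then -1 else 1 :: 'a)) = 0"
      by (intro prod_zero) (auto intro!: bexI[of _ i])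
    with False show ?thesis by (simp only: if_False)
  qed
  finally show ?thesis .
qed

lemma bit_imp_less_of_less_exp: "(a::nat) < 2 ^ n \<Longrightarrow> bit a i \<Longrightarrow> i < n"
  by (metis bit_take_bit_iff take_bit_nat_eq_self_iff)

lemma nat_eq_if_low_bits_eq:
  assumes "(a::nat) < 2 ^ n" "b < 2 ^ n" "\<forall>i<n. bit a i = bit b i"
  shows "a = b"
proof (rule bit_eqI)
  fix i
  show "bit a i = bit b i"
    using assms bit_imp_less_of_less_exp[of a n i] bit_imp_less_of_less_exp[of b n i]
    by (cases "i < n") auto
qed

lemma xor_less_exp: "(a::nat) < 2 ^ n \<Longrightarrow> b < 2 ^ n \<Longrightarrow> a XOR b < 2 ^ n"
  by (metis take_bit_nat_eq_self_iff take_bit_xor)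

lemma exp_xor_eq_add: "(j::nat) < 2 ^ m \<Longrightarrow> 2 ^ m XOR j = 2 ^ m + j"
  using bit_imp_less_of_less_exp[of j m]
  by (intro disjunctive_add_eq_xor[symmetric] bit_eqI) (auto simp: bit_and_iff bit_exp_iff)

lemma mask_xor_eq_diff: "(j::nat) < 2 ^ m \<Longrightarrow> (2 ^ m - 1) XOR j = 2 ^ m - 1 - j"
proof -
  assume j: "j < 2 ^ m"
  have mask: "bit (2 ^ m - 1 :: nat) i \<longleftrightarrow> i < m" for i
    using bit_mask_iff[where 'a=nat, of m i] by (simp add: mask_eq_exp_minus_1)
  have "((2 ^ m - 1) XOR j) + j = 2 ^ m - (1::nat)"
  proof -
    have "((2 ^ m - 1) XOR j) + j = ((2 ^ m - 1) XOR j) OR j"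
      using bit_imp_less_of_less_exp[OF j] mask
      by (intro disjunctive_add_eq_or bit_eqI) (auto simp: bit_and_iff bit_xor_iff)
    also have "\<dots> = 2 ^ m - 1"
      using bit_imp_less_of_less_exp[OF j] mask
      by (intro bit_eqI) (auto simp: bit_or_iff bit_xor_iff)
    finally show ?thesis .
  qed
  then show ?thesis by linarith
qed

lemma sum_minus_one_power_bdot_xor:
  assumes "(a::nat) < 2 ^ n" "b < 2 ^ n"
  shows "(\<Sum>x<(2::nat) ^ n. (-1::'a::comm_ring_1) ^ bdot n x (a XOR b)) = (if a = b then 2 ^ n else 0)"
proof -
  have "(\<forall>i<n. \<not> bit (a XOR b) i) \<longleftrightarrow> a = b"
    using assms nat_eq_if_low_bits_eq[of a n b] by (auto simp: bit_xor_iff)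
  then show ?thesis by (simp add: sum_minus_one_power_bdot)
qed

lemma hadamard_phase_oracle_hadamard:
  assumes j: "j < 2 ^ n"
  shows "hadamard n (phase_oracle (2 ^ n) (hadamard_codeword n j) (hadamard n v))
         = (\<lambda>y. if y < 2 ^ n then v (y XOR j) else 0)"
proof
  fix y
  show "hadamard n (phase_oracle (2 ^ n) (hadamard_codeword n j) (hadamard n v)) y
        = (if y < 2 ^ n then v (y XOR j) else 0)"
  proof (cases "y < 2 ^ n")
    case False
    then show ?thesis by (simp add: hadamard_def)
  next
    case y: True
    define c where "c = complex_of_real (1 / sqrt (2 ^ n))"
    let ?\<chi> = "\<lambda>x a. (-1::complex) ^ bdot n x a"
    have c2: "c * c * 2 ^ n = 1"
    proof -
      have "(1 / sqrt (2 ^ n)) * (1 / sqrt (2 ^ n)) * (2::real) ^ n = 1"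
        by simp
      then show ?thesis
        unfolding c_def by (metis of_real_1 of_real_mult of_real_numeral of_real_power)
    qed
    have "hadamard n (phase_oracle (2 ^ n) (hadamard_codeword n j) (hadamard n v)) y
        = c * (\<Sum>x<2 ^ n. ?\<chi> y x * (?\<chi> x j * (c * (\<Sum>w<2 ^ n. ?\<chi> x w * v w))))"
      using y by (simp add: hadamard_def phase_oracle_def hadamard_codeword_def c_def)
    also have "\<dots> = c * c * (\<Sum>x<2 ^ n. \<Sum>w<2 ^ n. v w * ?\<chi> x (y XOR j XOR w))"
      by (simp add: bdot_commute[of n y] minus_one_power_bdot_xor sum_distrib_left
          sum_distrib_right mult_ac)
    also have "\<dots> = c * c * (\<Sum>w<2 ^ n. v w * (\<Sum>x<2 ^ n. ?\<chi> x ((y XOR j) XOR w)))"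
      by (subst sum.swap) (simp add: sum_distrib_left xor.assoc)
    also have "\<dots> = c * c * (\<Sum>w<2 ^ n. if w = y XOR j then v w * 2 ^ n else 0)"
      using xor_less_exp[OF y j] by (intro arg_cong[where f="(*) (c * c)"] sum.cong)
        (auto simp: sum_minus_one_power_bdot_xor)
    also have "\<dots> = v (y XOR j)"
      using xor_less_exp[OF y j] c2 by (simp add: mult_ac)
    finally show ?thesis using y by simp
  qed
qed

lemma ket_xor:
  assumes "j < 2 ^ n" "y < 2 ^ n"
  shows "ket (2 ^ n) k (y XOR j) = ket (2 ^ n) (k XOR j) y"
proof -
  have "y XOR j = k \<longleftrightarrow> y = k XOR j"
    by (metis xor.assoc xor_self_eq xor.right_neutral)
  moreover have "y = k XOR j \<Longrightarrow> k < 2 ^ n \<longleftrightarrow> k XOR j < 2 ^ n"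
    using assms xor_less_exp by (metis xor.assoc xor_self_eq xor.right_neutral)
  ultimately show ?thesis by (auto simp: ket_def)
qed

lemma spin_ket_eq_ket: "real k = m + (real N - 1) / 2 \<Longrightarrow> spin_ket N m = ket N k"
  unfolding spin_ket_def by (metis floor_of_nat nat_int)

theorem lemma1:
  fixes n j :: nat
  assumes "n \<ge> 1" and "j < 2 ^ n div 2"
  shows "hadamard n (phase_oracle (2 ^ n) (hadamard_codeword n j)
            (hadamard n (\<lambda>y. spin_ket (2 ^ n) (1/2) y + spin_ket (2 ^ n) (-1/2) y)))
         = (\<lambda>y. spin_ket (2 ^ n) (1/2 + real j) y + spin_ket (2 ^ n) (-1/2 - real j) y)"
proof -
  define M :: nat where "M = 2 ^ (n - 1)"
  have N: "(2::nat) ^ n = 2 * M"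
    using assms(1) unfolding M_def by (metis Suc_diff_1 less_le_trans power_Suc zero_less_one)
  have jM: "j < M" "M \<ge> 1"
    using assms(2) N by (simp_all add: M_def)
  have j: "j < 2 ^ n"
    using jM N by simp
  have spins: "spin_ket (2 ^ n) (1/2) = ket (2 ^ n) M"
    "spin_ket (2 ^ n) (-1/2) = ket (2 ^ n) (M - 1)"
    "spin_ket (2 ^ n) (1/2 + real j) = ket (2 ^ n) (M XOR j)"
    "spin_ket (2 ^ n) (-1/2 - real j) = ket (2 ^ n) ((M - 1) XOR j)"
    using jM exp_xor_eq_add[of j "n - 1"] mask_xor_eq_diff[of j "n - 1"]
    by (auto intro!: spin_ket_eq_ket simp: N M_def of_nat_diff field_simps)
  show ?thesis
    unfolding spins hadamard_phase_oracle_hadamard[OF j]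
    by (rule ext) (auto simp: ket_xor[OF j], auto simp: ket_def)
qed

end
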